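(* Let $\alpha_2\in\mathbb{C}$ and let $u(t)$ be a solution of the fourth-order equation $$\frac{d^4u}{dt^4}=10u\left(\frac{du}{dt}\right)^2+10u^2\frac{d^2u}{dt^2}-6u^5+tu+\alpha_2 .$$ Define $$q_1=u,\quad p_1=\frac{d^3u}{dt^3}+\left(\frac{du}{dt}\right)^2-\frac t2+\left(3u^3-6u\frac{du}{dt}-2\frac{d^2u}{dt^2}\right)u,\quad q_2=\frac{d^2u}{dt^2}-2u\frac{du}{dt},\quad p_2=\frac{du}{dt}-u^2 .$$ Then the map $(u,u',u'',u''')\mapsto(q_1,p_1,q_2,p_2)$ is birational, and $(q_1,p_1,q_2,p_2)$ satisfies the Hamiltonian system $$\frac{dq_1}{dt}=\frac{\partial H}{\partial p_1}=q_1^2+p_2,\quad \frac{dp_1}{dt}=-\frac{\partial H}{\partial q_1}=-2q_1p_1+\alpha_2-\frac12,\quad \frac{dq_2}{dt}=\frac{\partial H}{\partial p_2}=-3p_2^2+p_1+\frac t2,\quad \frac{dp_2}{dt}=-\frac{\partial H}{\partial q_2}=q_2$$ with the polynomial Hamiltonian $$H=q_1^2p_1+\left(\frac12-\alpha_2\right)q_1-p_2^3+\frac t2p_2-\frac{q_2^2}{2}+p_1p_2 .$$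
   Context: This fourth-order equation is the second member $P_{II}^{(2)}$ of the second Painlevé hierarchy. Primes denote $d/dt$. *)

theory Defs
  imports Complex_Main
begin

inductive polyfun :: "((nat \<Rightarrow> complex) \<Rightarrow> complex) \<Rightarrow> bool" where
  pf_const: "polyfun (\<lambda>v. c)"
| pf_var: "polyfun (\<lambda>v. v i)"
| pf_add: "polyfun f \<Longrightarrow> polyfun g \<Longrightarrow> polyfun (\<lambda>v. f v + g v)"
| pf_mult: "polyfun f \<Longrightarrow> polyfun g \<Longrightarrow> polyfun (\<lambda>v. f v * g v)"

type_synonym pt4 = "complex \<times> complex \<times> complex \<times> complex"

text \<open>Variable assignment: variable 0 is the independent variable t (the
  coefficients of the maps are allowed to be rational in t), variables 1..4 are
  the coordinates of the point of C^4.\<close>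
definition env :: "complex \<Rightarrow> pt4 \<Rightarrow> nat \<Rightarrow> complex" where
  "env t x = (case x of (a, b, c, d) \<Rightarrow>
      (\<lambda>i. if i < 5 then [t, a, b, c, d] ! i else 0))"

definition rat_map_rep ::
  "(nat \<Rightarrow> (nat \<Rightarrow> complex) \<Rightarrow> complex) \<Rightarrow> (nat \<Rightarrow> (nat \<Rightarrow> complex) \<Rightarrow> complex)
    \<Rightarrow> (complex \<Rightarrow> pt4 \<Rightarrow> pt4) \<Rightarrow> bool" where
  "rat_map_rep N D F \<longleftrightarrow>
     (\<forall>k<4. polyfun (N k) \<and> polyfun (D k) \<and> (\<exists>t x. D k (env t x) \<noteq> 0)) \<and>
     (\<forall>t x. (\<forall>k<4. D k (env t x) \<noteq> 0) \<longrightarrow>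
        F t x = (N 0 (env t x) / D 0 (env t x), N 1 (env t x) / D 1 (env t x),
                 N 2 (env t x) / D 2 (env t x), N 3 (env t x) / D 3 (env t x)))"

definition rdom ::
  "(nat \<Rightarrow> (nat \<Rightarrow> complex) \<Rightarrow> complex) \<Rightarrow> (complex \<times> pt4) set" where
  "rdom D = {(t, x). \<forall>k<4. D k (env t x) \<noteq> 0}"

definition birational :: "(complex \<Rightarrow> pt4 \<Rightarrow> pt4) \<Rightarrow> bool" where
  "birational F \<longleftrightarrow> (\<exists>N D N' D' G.
     rat_map_rep N D F \<and> rat_map_rep N' D' G \<and>
     (\<forall>t x. (t, x) \<in> rdom D \<and> (t, F t x) \<in> rdom D' \<longrightarrow> G t (F t x) = x) \<and>
     (\<forall>t y. (t, y) \<in> rdom D' \<and> (t, G t y) \<in> rdom D \<longrightarrow> F t (G t y) = y))"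

definition phi_q1 :: "complex \<Rightarrow> complex \<Rightarrow> complex \<Rightarrow> complex \<Rightarrow> complex \<Rightarrow> complex" where
  "phi_q1 t u u1 u2 u3 = u"
definition phi_p1 :: "complex \<Rightarrow> complex \<Rightarrow> complex \<Rightarrow> complex \<Rightarrow> complex \<Rightarrow> complex" where
  "phi_p1 t u u1 u2 u3 = u3 + u1^2 - t/2 + (3*u^3 - 6*u*u1 - 2*u2) * u"
definition phi_q2 :: "complex \<Rightarrow> complex \<Rightarrow> complex \<Rightarrow> complex \<Rightarrow> complex \<Rightarrow> complex" where
  "phi_q2 t u u1 u2 u3 = u2 - 2*u*u1"
definition phi_p2 :: "complex \<Rightarrow> complex \<Rightarrow> complex \<Rightarrow> complex \<Rightarrow> complex \<Rightarrow> complex" where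
  "phi_p2 t u u1 u2 u3 = u1 - u^2"

definition Phi :: "complex \<Rightarrow> pt4 \<Rightarrow> pt4" where
  "Phi t x = (case x of (u, u1, u2, u3) \<Rightarrow>
     (phi_q1 t u u1 u2 u3, phi_p1 t u u1 u2 u3, phi_q2 t u u1 u2 u3, phi_p2 t u u1 u2 u3))"

definition Ham :: "complex \<Rightarrow> complex \<Rightarrow> complex \<Rightarrow> complex \<Rightarrow> complex \<Rightarrow> complex \<Rightarrow> complex" where
  "Ham \<alpha>2 t q1 p1 q2 p2 = q1^2 * p1 + (1/2 - \<alpha>2) * q1 - p2^3 + t/2 * p2 - q2^2/2 + p1 * p2"

end

theory Submission
  imports Defs
begin

text \<open>The map is triangular: \<open>q1\<close> determines \<open>u\<close>, then \<open>p2\<close> gives \<open>u'\<close>, \<open>q2\<close> gives \<open>u''\<close> and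
  \<open>p1\<close> gives \<open>u'''\<close>, each time polynomially; so \<open>Phi\<close> is a polynomial automorphism of
  \<open>\<complex>\<^sup>4\<close> over \<open>\<complex>[t]\<close>. Along a solution, three of Hamilton's equations are identities of the
  differential calculus; only the one for \<open>p1\<close> involves \<open>u''''\<close>, which the ODE eliminates.\<close>

lemma polyfun_diff:
  assumes "polyfun f" and "polyfun g"
  shows "polyfun (\<lambda>v. f v - g v)"
proof -
  have "polyfun (\<lambda>v. f v + (-1) * g v)"
    using assms by (intro polyfun.intros)
  then show ?thesis
    by simp
qed

lemma polyfun_divide_const: "polyfun f \<Longrightarrow> polyfun (\<lambda>v. f v / c)"
  using pf_mult[OF _ pf_const, of f "1 / c"] by simp

lemma polyfun_power: "polyfun f \<Longrightarrow> polyfun (\<lambda>v. f v ^ n)"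
  by (induction n) (auto intro: polyfun.intros)

lemmas polyfun_intros = polyfun.intros polyfun_diff polyfun_divide_const polyfun_power

definition coord :: "nat \<Rightarrow> pt4 \<Rightarrow> complex" where
  "coord k x = [fst x, fst (snd x), fst (snd (snd x)), snd (snd (snd x))] ! k"

definition component :: "(complex \<Rightarrow> pt4 \<Rightarrow> pt4) \<Rightarrow> nat \<Rightarrow> (nat \<Rightarrow> complex) \<Rightarrow> complex" where
  "component F k = (\<lambda>v. coord k (F (v 0) (v 1, v 2, v 3, v 4)))"

lemma component_env: "component F k (env t x) = coord k (F t x)"
  by (cases x) (simp add: component_def env_def)

lemma rat_map_rep_component:
  assumes "\<And>k. k < 4 \<Longrightarrow> polyfun (component F k)"
  shows "rat_map_rep (component F) (\<lambda>k v. 1) F"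
  using assms pf_const by (auto simp: rat_map_rep_def component_env coord_def)

lemma birational_if_polynomial_inverse:
  assumes "\<And>k. k < 4 \<Longrightarrow> polyfun (component F k)"
    and "\<And>k. k < 4 \<Longrightarrow> polyfun (component G k)"
    and "\<And>t x. G t (F t x) = x"
    and "\<And>t y. F t (G t y) = y"
  shows "birational F"
  unfolding birational_def
  using rat_map_rep_component[OF assms(1)] rat_map_rep_component[OF assms(2)] assms(3,4)
  by blast

definition Phi_inv :: "complex \<Rightarrow> pt4 \<Rightarrow> pt4" where
  "Phi_inv t y = (case y of (q1, p1, q2, p2) \<Rightarrow>
     let u = q1; u1 = p2 + u^2; u2 = q2 + 2*u*u1;
         u3 = p1 - u1^2 + t/2 - (3*u^3 - 6*u*u1 - 2*u2) * u
     in (u, u1, u2, u3))"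

lemma Phi_inv_Phi: "Phi_inv t (Phi t x) = x"
  by (cases x) (simp add: Phi_inv_def Phi_def phi_q1_def phi_p1_def phi_q2_def phi_p2_def)

lemma Phi_Phi_inv: "Phi t (Phi_inv t y) = y"
  by (cases y) (simp add: Let_def Phi_inv_def Phi_def phi_q1_def phi_p1_def phi_q2_def phi_p2_def)

lemma less_4_cases: "(k::nat) < 4 \<Longrightarrow> k = 0 \<or> k = 1 \<or> k = 2 \<or> k = 3"
  by auto

lemma polyfun_component_Phi: "k < 4 \<Longrightarrow> polyfun (component Phi k)"
  by (drule less_4_cases, elim disjE)
     (simp add: component_def coord_def Phi_def phi_q1_def phi_p1_def phi_q2_def phi_p2_def,
      intro polyfun_intros)+

lemma polyfun_component_Phi_inv: "k < 4 \<Longrightarrow> polyfun (component Phi_inv k)"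
  by (drule less_4_cases, elim disjE)
     (simp add: component_def coord_def Phi_inv_def Let_def, intro polyfun_intros)+

lemma birational_Phi: "birational Phi"
  using polyfun_component_Phi polyfun_component_Phi_inv Phi_inv_Phi Phi_Phi_inv
  by (rule birational_if_polynomial_inverse)

lemma Ham_has_partial_derivatives:
  "((\<lambda>x. Ham \<alpha>2 t q1 x q2 p2) has_field_derivative (q1^2 + p2)) (at p1)"
  "((\<lambda>x. Ham \<alpha>2 t x p1 q2 p2) has_field_derivative (2*q1*p1 - \<alpha>2 + 1/2)) (at q1)"
  "((\<lambda>x. Ham \<alpha>2 t q1 p1 q2 x) has_field_derivative (-3*p2^2 + p1 + t/2)) (at p2)"
  "((\<lambda>x. Ham \<alpha>2 t q1 p1 x p2) has_field_derivative (-q2)) (at q2)"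
  unfolding Ham_def by (auto intro!: derivative_eq_intros simp: algebra_simps power2_eq_square)

abbreviation along ::
  "(complex \<Rightarrow> complex \<Rightarrow> complex \<Rightarrow> complex \<Rightarrow> complex \<Rightarrow> complex)
    \<Rightarrow> (complex \<Rightarrow> complex) \<Rightarrow> (complex \<Rightarrow> complex) \<Rightarrow> (complex \<Rightarrow> complex)
    \<Rightarrow> (complex \<Rightarrow> complex) \<Rightarrow> complex \<Rightarrow> complex" where
  "along f u u1 u2 u3 s \<equiv> f s (u s) (u1 s) (u2 s) (u3 s)"

lemma has_field_derivative_along_phi_q1:
  assumes "(u has_field_derivative u1 t) (at t)"
  shows "(along phi_q1 u u1 u2 u3 has_field_derivative
            (along phi_q1 u u1 u2 u3 t)^2 + along phi_p2 u u1 u2 u3 t) (at t)"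
  using assms by (simp add: phi_q1_def phi_p2_def)

lemma has_field_derivative_along_phi_p2:
  assumes "(u has_field_derivative u1 t) (at t)" and "(u1 has_field_derivative u2 t) (at t)"
  shows "(along phi_p2 u u1 u2 u3 has_field_derivative along phi_q2 u u1 u2 u3 t) (at t)"
  unfolding phi_p2_def phi_q2_def
  by (auto intro!: derivative_eq_intros assms simp: algebra_simps)

lemma has_field_derivative_along_phi_q2:
  assumes "(u has_field_derivative u1 t) (at t)" and "(u1 has_field_derivative u2 t) (at t)"
    and "(u2 has_field_derivative u3 t) (at t)"
  shows "(along phi_q2 u u1 u2 u3 has_field_derivative
            -3 * (along phi_p2 u u1 u2 u3 t)^2 + along phi_p1 u u1 u2 u3 t + t/2) (at t)"
  unfolding phi_q2_def phi_p2_def phi_p1_def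
  by (auto intro!: derivative_eq_intros assms simp: algebra_simps power2_eq_square power3_eq_cube)

lemma has_field_derivative_along_phi_p1:
  assumes "(u has_field_derivative u1 t) (at t)" and "(u1 has_field_derivative u2 t) (at t)"
    and "(u2 has_field_derivative u3 t) (at t)" and "(u3 has_field_derivative u4 t) (at t)"
    and ode: "u4 t = 10 * u t * (u1 t)^2 + 10 * (u t)^2 * u2 t - 6 * (u t)^5 + t * u t + \<alpha>2"
  shows "(along phi_p1 u u1 u2 u3 has_field_derivative
            -2 * along phi_q1 u u1 u2 u3 t * along phi_p1 u u1 u2 u3 t + \<alpha>2 - 1/2) (at t)"
proof -
  have "(along phi_p1 u u1 u2 u3 has_field_derivative
           u4 t + 2 * u1 t * u2 t - 1/2
           + (9 * (u t)^2 * u1 t - 6 * (u1 t)^2 - 6 * u t * u2 t - 2 * u3 t) * u t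
           + (3 * (u t)^3 - 6 * u t * u1 t - 2 * u2 t) * u1 t) (at t)"
    unfolding phi_p1_def
    by (auto intro!: derivative_eq_intros assms simp: algebra_simps power2_eq_square power3_eq_cube)
  moreover have "u4 t + 2 * u1 t * u2 t - 1/2
           + (9 * (u t)^2 * u1 t - 6 * (u1 t)^2 - 6 * u t * u2 t - 2 * u3 t) * u t
           + (3 * (u t)^3 - 6 * u t * u1 t - 2 * u2 t) * u1 t
         = -2 * along phi_q1 u u1 u2 u3 t * along phi_p1 u u1 u2 u3 t + \<alpha>2 - 1/2"
    unfolding ode phi_q1_def phi_p1_def
    by (simp add: algebra_simps power2_eq_square power3_eq_cube eval_nat_numeral)
  ultimately show ?thesis
    by simp
qed

theorem theorem2p1:
  fixes \<alpha>2 :: complex and S :: "complex set"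
    and u u1 u2 u3 u4 :: "complex \<Rightarrow> complex"
  assumes S_open: "open S"
    and d1: "\<And>t. t \<in> S \<Longrightarrow> (u has_field_derivative u1 t) (at t)"
    and d2: "\<And>t. t \<in> S \<Longrightarrow> (u1 has_field_derivative u2 t) (at t)"
    and d3: "\<And>t. t \<in> S \<Longrightarrow> (u2 has_field_derivative u3 t) (at t)"
    and d4: "\<And>t. t \<in> S \<Longrightarrow> (u3 has_field_derivative u4 t) (at t)"
    and ode: "\<And>t. t \<in> S \<Longrightarrow>
       u4 t = 10 * u t * (u1 t)^2 + 10 * (u t)^2 * u2 t - 6 * (u t)^5 + t * u t + \<alpha>2"
  shows "birational Phi
    \<and> (\<forall>t q1 p1 q2 p2.
          ((\<lambda>x. Ham \<alpha>2 t q1 x q2 p2) has_field_derivative (q1^2 + p2)) (at p1)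
        \<and> ((\<lambda>x. Ham \<alpha>2 t x p1 q2 p2) has_field_derivative (2*q1*p1 - \<alpha>2 + 1/2)) (at q1)
        \<and> ((\<lambda>x. Ham \<alpha>2 t q1 p1 q2 x) has_field_derivative (-3*p2^2 + p1 + t/2)) (at p2)
        \<and> ((\<lambda>x. Ham \<alpha>2 t q1 p1 x p2) has_field_derivative (-q2)) (at q2))
    \<and> (\<forall>t\<in>S.
        let q1 = phi_q1 t (u t) (u1 t) (u2 t) (u3 t);
            p1 = phi_p1 t (u t) (u1 t) (u2 t) (u3 t);
            q2 = phi_q2 t (u t) (u1 t) (u2 t) (u3 t);
            p2 = phi_p2 t (u t) (u1 t) (u2 t) (u3 t)
        in ((\<lambda>s. phi_q1 s (u s) (u1 s) (u2 s) (u3 s)) has_field_derivative (q1^2 + p2)) (at t)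
         \<and> ((\<lambda>s. phi_p1 s (u s) (u1 s) (u2 s) (u3 s)) has_field_derivative
               (-2*q1*p1 + \<alpha>2 - 1/2)) (at t)
         \<and> ((\<lambda>s. phi_q2 s (u s) (u1 s) (u2 s) (u3 s)) has_field_derivative
               (-3*p2^2 + p1 + t/2)) (at t)
         \<and> ((\<lambda>s. phi_p2 s (u s) (u1 s) (u2 s) (u3 s)) has_field_derivative q2) (at t))"
proof -
  have flow: "(along phi_q1 u u1 u2 u3 has_field_derivative
                (along phi_q1 u u1 u2 u3 t)^2 + along phi_p2 u u1 u2 u3 t) (at t)"
    "(along phi_p1 u u1 u2 u3 has_field_derivative
        -2 * along phi_q1 u u1 u2 u3 t * along phi_p1 u u1 u2 u3 t + \<alpha>2 - 1/2) (at t)"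
    "(along phi_q2 u u1 u2 u3 has_field_derivative
        -3 * (along phi_p2 u u1 u2 u3 t)^2 + along phi_p1 u u1 u2 u3 t + t/2) (at t)"
    "(along phi_p2 u u1 u2 u3 has_field_derivative along phi_q2 u u1 u2 u3 t) (at t)"
    if "t \<in> S" for t
    using d1[OF that] d2[OF that] d3[OF that] d4[OF that] ode[OF that]
    by (blast intro: has_field_derivative_along_phi_q1 has_field_derivative_along_phi_p1
        has_field_derivative_along_phi_q2 has_field_derivative_along_phi_p2)+
  show ?thesis
    unfolding Let_def using birational_Phi Ham_has_partial_derivatives flow by simp
qed

end
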